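(* Let $\widetilde{\eta}\in\mathbf{R}$ with $|\widetilde\eta|$ large, let $\lambda>0$, and define $$\mathfrak{g}(a,\tau,\widetilde{\eta},\lambda):=-\lambda a+\frac{2\widetilde{\eta}^2(1-\tau)}{\tau}+\frac{2-\tau}{2a^2\tau^2}.$$ Let $$\Omega:=\Bigl[0,\tfrac{1}{3\sqrt3}-\tfrac{\mathrm{i}}{3}\Bigr]\cup\Bigl(\tfrac{1}{3\sqrt3}-\tfrac{\mathrm{i}}{3},1-\tfrac{1}{3\sqrt3}-\tfrac{\mathrm{i}}{3}\Bigr]\cup\Bigl(1-\tfrac{1}{3\sqrt3}-\tfrac{\mathrm{i}}{3},1\Bigr]$$ (traversed from $0$ to $1$) and $$\Lambda:=[0,z_0]\cup\bigl(z_0,z_0+e^{3\mathrm{i}\pi/5}\infty\bigr),\qquad z_0:=\frac{\sin(4\pi/15)}{\sin(17\pi/30)}e^{\mathrm{i}\pi/6},$$ and, for a fixed large constant $C>0$, set $$\widetilde\Omega:=\{\tau\in\Omega:|\tau|\le C|\widetilde{\eta}|^{-1/2}\},\qquad \widetilde\Lambda:=\{a\in\Lambda:|a|\le|\widetilde{\eta}|^{-1/2}\}.$$ Then for any large constant $C_0>0$, any fixed $\gamma\in\mathbf{R}$ and any $C_0^{-1}\le\lambda\le C_0$, $$\int_{\Omega\setminus\widetilde\Omega}\tau^{-\gamma}e^{\mathfrak{g}(a,1,\widetilde{\eta},\lambda)-\mathfrak{g}(a,\tau,\widetilde{\eta},\lambda)}\,\mathrm{d}\tau=\frac{1}{2\widetilde{\eta}^2}+\mathcal{O}\bigl(|\widetilde{\eta}|^{-3}\bigr)$$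 uniformly in $a\in\Lambda\setminus\widetilde\Lambda$, where the implicit constant in $\mathcal{O}(\cdot)$ depends on $C_0$.
   Context: $\tau^{-\gamma}$ denotes the principal branch. The function $\mathfrak{g}$ is the phase function of the limiting one-point function of the shifted real Ginibre ensemble at the edge ($\widetilde\delta=0$); note that $\mathfrak{g}(a,1,\widetilde\eta,\lambda)-\mathfrak{g}(a,\tau,\widetilde\eta,\lambda)=-\frac{2\widetilde\eta^2(1-\tau)}{\tau}+\frac{\tau^2+\tau-2}{2a^2\tau^2}$. The asymptotic statement is as $|\widetilde\eta|\to\infty$. *)

theory Defs
  imports "HOL-Analysis.Analysis"
begin

definition frak_g :: "complex \<Rightarrow> complex \<Rightarrow> real \<Rightarrow> real \<Rightarrow> complex" where
  "frak_g a \<tau> \<eta> lam =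
     - of_real lam * a + 2 * of_real (\<eta>^2) * (1 - \<tau>) / \<tau> + (2 - \<tau>) / (2 * a^2 * \<tau>^2)"

definition Omega_p1 :: complex where
  "Omega_p1 = Complex (1 / (3 * sqrt 3)) (- 1 / 3)"

definition Omega_p2 :: complex where
  "Omega_p2 = Complex (1 - 1 / (3 * sqrt 3)) (- 1 / 3)"

definition Omega_path :: "real \<Rightarrow> complex" where
  "Omega_path = linepath 0 Omega_p1 +++ linepath Omega_p1 Omega_p2 +++ linepath Omega_p2 1"

definition Omega :: "complex set" where
  "Omega = path_image Omega_path"

definition z0 :: complex where
  "z0 = of_real (sin (4 * pi / 15) / sin (17 * pi / 30)) * exp (\<i> * of_real (pi / 6))"

definition Lambda :: "complex set" where
  "Lambda = closed_segment 0 z0 \<union>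
            {z0 + of_real t * exp (\<i> * of_real (3 * pi / 5)) | t. t > 0}"

definition Omega_tilde :: "real \<Rightarrow> real \<Rightarrow> complex set" where
  "Omega_tilde C \<eta> = {\<tau> \<in> Omega. cmod \<tau> \<le> C * \<bar>\<eta>\<bar> powr (-1/2)}"

definition Lambda_tilde :: "real \<Rightarrow> complex set" where
  "Lambda_tilde \<eta> = {a \<in> Lambda. cmod a \<le> \<bar>\<eta>\<bar> powr (-1/2)}"

text \<open>Integral of f along the part of the path p (parametrised on [0,1]) lying in S.\<close>
definition path_part_domain :: "(real \<Rightarrow> complex) \<Rightarrow> complex set \<Rightarrow> real set" where
  "path_part_domain p S = {t \<in> {0..1}. p t \<in> S}"

definition path_part_integrand ::
  "(real \<Rightarrow> complex) \<Rightarrow> (complex \<Rightarrow> complex) \<Rightarrow> real \<Rightarrow> complex" where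
  "path_part_integrand p f t = f (p t) * vector_derivative p (at t within {0..1})"

definition integrand36 :: "real \<Rightarrow> complex \<Rightarrow> real \<Rightarrow> real \<Rightarrow> complex \<Rightarrow> complex" where
  "integrand36 \<gamma> a \<eta> lam \<tau> =
     \<tau> powr (- of_real \<gamma>) * exp (frak_g a 1 \<eta> lam - frak_g a \<tau> \<eta> lam)"

end

theory Submission
  imports Defs
begin

text \<open>
  With b = 1 / (2 a^2) the integrand is tau powr (-gamma) * exp (h tau), where
  h tau = -2 eta^2 (1 - tau) / tau + b (tau - 1) (tau + 2) / tau^2 has derivative p tau / tau^3
  with p tau = 2 eta^2 tau + b (4 - tau). One integration by parts against
  G = tau^3 * tau powr (-gamma) * exp h / p leaves the boundary terms G 1 - G tau0 (tau0 the inner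
  end of the truncated contour) and a remainder of size |tau powr (-gamma) * exp h| / eta^2.
  Since |b| <= |eta| / 2, G 1 = 1 / (2 eta^2 + 3 b) = 1 / (2 eta^2) + O(|eta|^-3).
  Along Omega, Re ((1 - tau) / tau) >= |1 - tau| / 25, so Re h <= - eta^2 |1 - tau| / 20 wherever
  |eta| |tau|^2 >= 100, i.e. off the truncated disc. Hence G tau0 and the remainder on the two
  segments away from 1 are exponentially small, while on the last segment the remainder is
  O(eta^-2 exp (-c eta^2 (1 - t))) and integrates to O(eta^-4).
\<close>

section \<open>The phase function and integration by parts\<close>

definition edge_phase :: "real \<Rightarrow> complex \<Rightarrow> complex \<Rightarrow> complex" where
  "edge_phase \<eta> b \<tau> = - 2 * of_real (\<eta>^2) * (1 - \<tau>) / \<tau> + b * (\<tau> - 1) * (\<tau> + 2) / \<tau>^2"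

definition edge_phase_numer :: "real \<Rightarrow> complex \<Rightarrow> complex \<Rightarrow> complex" where
  "edge_phase_numer \<eta> b \<tau> = 2 * of_real (\<eta>^2) * \<tau> + b * (4 - \<tau>)"

definition edge_integrand :: "real \<Rightarrow> real \<Rightarrow> complex \<Rightarrow> complex \<Rightarrow> complex" where
  "edge_integrand \<gamma> \<eta> b \<tau> = \<tau> powr (- of_real \<gamma>) * exp (edge_phase \<eta> b \<tau>)"

definition edge_boundary_term :: "real \<Rightarrow> real \<Rightarrow> complex \<Rightarrow> complex \<Rightarrow> complex" where
  "edge_boundary_term \<gamma> \<eta> b \<tau> = \<tau>^3 * edge_integrand \<gamma> \<eta> b \<tau> / edge_phase_numer \<eta> b \<tau>"

definition edge_remainder :: "real \<Rightarrow> real \<Rightarrow> complex \<Rightarrow> complex \<Rightarrow> complex" where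
  "edge_remainder \<gamma> \<eta> b \<tau> = \<tau>^2 * edge_integrand \<gamma> \<eta> b \<tau> *
     ((3 - of_real \<gamma>) * edge_phase_numer \<eta> b \<tau> - \<tau> * (2 * of_real (\<eta>^2) - b))
     / (edge_phase_numer \<eta> b \<tau>)^2"

lemma integrand36_eq_edge_integrand:
  assumes "a \<noteq> 0" "\<tau> \<noteq> 0"
  shows "integrand36 \<gamma> a \<eta> lam \<tau> = edge_integrand \<gamma> \<eta> (1 / (2 * a^2)) \<tau>"
proof -
  have "frak_g a 1 \<eta> lam - frak_g a \<tau> \<eta> lam = edge_phase \<eta> (1 / (2 * a^2)) \<tau>"
    using assms unfolding frak_g_def edge_phase_def
    by (simp add: field_simps) (simp add: algebra_simps eval_nat_numeral)
  then show ?thesis unfolding integrand36_def edge_integrand_def by simp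
qed

lemma edge_phase_eq:
  assumes "\<tau> \<noteq> 0"
  shows "edge_phase \<eta> b \<tau> = 2 * of_real (\<eta>^2) + b - (2 * of_real (\<eta>^2) - b) / \<tau> - 2 * b / \<tau>^2"
  using assms unfolding edge_phase_def by (simp add: field_simps power2_eq_square)

lemma has_field_derivative_edge_phase:
  assumes "\<tau> \<noteq> 0"
  shows "(edge_phase \<eta> b has_field_derivative edge_phase_numer \<eta> b \<tau> / \<tau>^3) (at \<tau>)"
proof -
  define K where "K = 2 * complex_of_real (\<eta>^2)"
  have "((\<lambda>\<tau>. K + b - (K - b) / \<tau> - 2 * b / \<tau>^2) has_field_derivative
          edge_phase_numer \<eta> b \<tau> / \<tau>^3) (at \<tau>)"
    using assms
    by (auto intro!: derivative_eq_intros simp: K_def edge_phase_numer_def field_simps eval_nat_numeral)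
  then show ?thesis
    by (rule has_field_derivative_transform_within_open[where S = "- {0}"])
       (use assms in \<open>auto simp: edge_phase_eq K_def\<close>)
qed

lemma has_field_derivative_edge_boundary_term:
  assumes "\<tau> \<notin> \<real>\<^sub>\<le>\<^sub>0" "edge_phase_numer \<eta> b \<tau> \<noteq> 0"
  shows "(edge_boundary_term \<gamma> \<eta> b has_field_derivative
           edge_integrand \<gamma> \<eta> b \<tau> + edge_remainder \<gamma> \<eta> b \<tau>) (at \<tau>)"
proof -
  have "\<tau> \<noteq> 0" using assms(1) by auto
  have numer: "(edge_phase_numer \<eta> b has_field_derivative 2 * of_real (\<eta>^2) - b) (at \<tau>)"
    unfolding edge_phase_numer_def[abs_def] by (auto intro!: derivative_eq_intros)
  have cube: "((\<lambda>x. x^3) has_field_derivative 3 * \<tau>^2) (at \<tau>)"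
    by (auto intro!: derivative_eq_intros simp: eval_nat_numeral)
  have "\<tau> powr (- of_real \<gamma> - 1) = \<tau> powr (- of_real \<gamma>) / \<tau>"
    using \<open>\<tau> \<noteq> 0\<close> by (simp add: powr_diff)
  then have pow: "((\<lambda>x. x powr (- of_real \<gamma>)) has_field_derivative
      - of_real \<gamma> * \<tau> powr (- of_real \<gamma>) / \<tau>) (at \<tau>)"
    using has_field_derivative_powr[OF assms(1), of "- of_real \<gamma>"] by simp
  note exp_phase = DERIV_chain2[OF DERIV_exp has_field_derivative_edge_phase[OF \<open>\<tau> \<noteq> 0\<close>]]
  note D = DERIV_divide[OF DERIV_mult[OF cube DERIV_mult[OF pow exp_phase]] numer assms(2)]
  show ?thesis
    unfolding edge_boundary_term_def[abs_def] edge_integrand_def[abs_def]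
    by (rule DERIV_cong[OF D])
       (use \<open>\<tau> \<noteq> 0\<close> assms(2) in
         \<open>simp add: edge_remainder_def edge_integrand_def field_simps power2_eq_square power3_eq_cube\<close>)
qed

lemma isCont_edge_remainder:
  assumes "\<tau> \<notin> \<real>\<^sub>\<le>\<^sub>0" "edge_phase_numer \<eta> b \<tau> \<noteq> 0"
  shows "isCont (edge_remainder \<gamma> \<eta> b) \<tau>"
proof -
  have "\<tau> \<noteq> 0" using assms(1) by auto
  have "isCont (edge_phase_numer \<eta> b) \<tau>"
    unfolding edge_phase_numer_def[abs_def] by (intro continuous_intros)
  then show ?thesis
    unfolding edge_remainder_def[abs_def] edge_integrand_def edge_phase_def
    using assms \<open>\<tau> \<noteq> 0\<close> by (auto intro!: continuous_intros)
qed

lemma path_part_integrand_linear: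
  assumes "0 \<le> lo" "hi \<le> 1" "\<forall>t\<in>{lo..hi}. p t = \<alpha> + of_real t * \<beta>" "t \<in> {lo<..<hi}"
  shows "path_part_integrand p f t = f (p t) * \<beta>"
proof -
  have "((\<lambda>t. \<alpha> + of_real t * \<beta>) has_vector_derivative \<beta>) (at t)"
    by (auto intro!: derivative_eq_intros)
  then have "(p has_vector_derivative \<beta>) (at t)"
    by (rule has_vector_derivative_transform_within_open[of _ _ _ "{lo<..<hi}"]) (use assms(3,4) in auto)
  then have "vector_derivative p (at t within {0..1}) = \<beta>"
    using assms(1,2,4)
    by (auto intro: vector_derivative_within_closed_interval has_vector_derivative_at_within)
  then show ?thesis unfolding path_part_integrand_def by simp
qed

lemma has_integral_path_part_by_parts:
  fixes p :: "real \<Rightarrow> complex" and f G R :: "complex \<Rightarrow> complex"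
  assumes "0 \<le> lo" "lo \<le> hi" "hi \<le> 1" and line: "\<forall>t\<in>{lo..hi}. p t = \<alpha> + of_real t * \<beta>"
    and deriv: "\<forall>t\<in>{lo..hi}. (G has_field_derivative f (p t) + R (p t)) (at (p t)) \<and> isCont R (p t)"
    and bound: "\<forall>t\<in>{lo..hi}. cmod (R (p t)) * cmod \<beta> \<le> B t" and "B integrable_on {lo..hi}"
  shows "\<exists>I. (path_part_integrand p f has_integral G (p hi) - G (p lo) - I) {lo..hi} \<and>
             cmod I \<le> integral {lo..hi} B"
proof (intro exI conjI)
  define l where "l t = \<alpha> + of_real t * \<beta>" for t :: real
  have dl: "(l has_vector_derivative \<beta>) (at t)" for t
    unfolding l_def by (auto intro!: derivative_eq_intros)
  have "continuous_on {lo..hi} (\<lambda>t. R (l t) * \<beta>)"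
  proof (intro continuous_at_imp_continuous_on ballI)
    fix t assume "t \<in> {lo..hi}"
    then have "isCont R (l t)" using deriv line by (simp add: l_def)
    moreover have "isCont l t" using dl by (rule has_vector_derivative_continuous)
    ultimately have "isCont (\<lambda>t. R (l t)) t" using isCont_o2 by blast
    then show "isCont (\<lambda>t. R (l t) * \<beta>) t" by (intro continuous_intros)
  qed
  then have "continuous_on {lo..hi} (\<lambda>t. R (p t) * \<beta>)"
    by (rule continuous_on_eq) (use line in \<open>simp add: l_def\<close>)
  then have int: "(\<lambda>t. R (p t) * \<beta>) integrable_on {lo..hi}"
    by (rule integrable_continuous_interval)
  show "cmod (integral {lo..hi} (\<lambda>t. R (p t) * \<beta>)) \<le> integral {lo..hi} B"
    using bound
    by (intro integral_norm_bound_integral[OF int \<open>B integrable_on {lo..hi}\<close>]) (simp add: norm_mult)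
  have "((\<lambda>t. (f (p t) + R (p t)) * \<beta>) has_integral (G \<circ> l) hi - (G \<circ> l) lo) {lo..hi}"
  proof (rule fundamental_theorem_of_calculus[OF assms(2)])
    fix t assume t: "t \<in> {lo..hi}"
    have "((G \<circ> l) has_vector_derivative \<beta> * (f (p t) + R (p t))) (at t)"
      by (rule field_vector_diff_chain_at[OF dl]) (use deriv line t in \<open>simp add: l_def\<close>)
    then show "((G \<circ> l) has_vector_derivative (f (p t) + R (p t)) * \<beta>) (at t within {lo..hi})"
      by (simp add: mult.commute has_vector_derivative_at_within)
  qed
  then have "((\<lambda>t. (f (p t) + R (p t)) * \<beta> - R (p t) * \<beta>) has_integral
               G (l hi) - G (l lo) - integral {lo..hi} (\<lambda>t. R (p t) * \<beta>)) {lo..hi}"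
    unfolding o_def by (rule has_integral_diff[OF _ int[unfolded has_integral_integral]])
  moreover have "l hi = p hi" "l lo = p lo" using line assms(2) by (simp_all add: l_def)
  ultimately have F: "((\<lambda>t. f (p t) * \<beta>) has_integral
               G (p hi) - G (p lo) - integral {lo..hi} (\<lambda>t. R (p t) * \<beta>)) {lo..hi}"
    by (simp add: distrib_right)
  show "(path_part_integrand p f has_integral
               G (p hi) - G (p lo) - integral {lo..hi} (\<lambda>t. R (p t) * \<beta>)) {lo..hi}"
  proof (rule has_integral_spike_finite[OF _ _ F])
    fix t assume "t \<in> {lo..hi} - {lo, hi}"
    then show "path_part_integrand p f t = f (p t) * \<beta>"
      by (intro path_part_integrand_linear[OF assms(1,3) line]) auto
  qed simp
qed


lemma norm_edge_integrand:
  "cmod (edge_integrand \<gamma> \<eta> b \<tau>) = cmod \<tau> powr (- \<gamma>) * exp (Re (edge_phase \<eta> b \<tau>))"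
  unfolding edge_integrand_def by (simp add: norm_mult norm_exp_eq_Re norm_powr_real_powr')

lemma Re_one_minus_div:
  assumes "\<tau> \<noteq> 0"
  shows "Re ((1 - \<tau>) / \<tau>) = Re \<tau> / (cmod \<tau>)^2 - 1"
proof -
  have "(1 - \<tau>) / \<tau> = inverse \<tau> - 1" using assms by (simp add: field_simps)
  then show ?thesis by (simp add: cmod_power2)
qed

lemma Re_edge_phase_le:
  assumes "cmod b \<le> \<bar>\<eta>\<bar> / 2" "cmod \<tau> \<le> 1" "100 \<le> \<bar>\<eta>\<bar> * (cmod \<tau>)^2"
    and "cmod (1 - \<tau>) / 25 \<le> Re ((1 - \<tau>) / \<tau>)"
  shows "Re (edge_phase \<eta> b \<tau>) \<le> - (\<eta>^2 * cmod (1 - \<tau>) / 20)"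
proof -
  have "\<tau> \<noteq> 0" using assms(3) by auto
  have "Re (- 2 * of_real (\<eta>^2) * (1 - \<tau>) / \<tau>) = - 2 * \<eta>^2 * Re ((1 - \<tau>) / \<tau>)"
    by (simp add: Re_divide algebra_simps)
  also have "\<dots> \<le> - 2 * \<eta>^2 * (cmod (1 - \<tau>) / 25)"
    using assms(4) by (intro mult_left_mono_neg) auto
  also have "\<dots> = - (2 / 25) * (\<eta>^2 * cmod (1 - \<tau>))" by simp
  finally have first: "Re (- 2 * of_real (\<eta>^2) * (1 - \<tau>) / \<tau>) \<le> - (2 / 25) * (\<eta>^2 * cmod (1 - \<tau>))" .
  have "cmod (\<tau> + 2) \<le> 3" using norm_triangle_ineq[of \<tau> 2] assms(2) by simp
  have "\<bar>\<eta>\<bar> * 100 \<le> \<bar>\<eta>\<bar> * (\<bar>\<eta>\<bar> * (cmod \<tau>)^2)" using assms(3) by (intro mult_left_mono) auto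
  then have inv_sq: "\<bar>\<eta>\<bar> / (cmod \<tau>)^2 \<le> \<eta>^2 / 100"
    using \<open>\<tau> \<noteq> 0\<close> by (simp add: field_simps power2_eq_square abs_mult_self_eq)
  have "Re (b * (\<tau> - 1) * (\<tau> + 2) / \<tau>^2) \<le> cmod (b * (\<tau> - 1) * (\<tau> + 2) / \<tau>^2)"
    by (rule complex_Re_le_cmod)
  also have "\<dots> = cmod b * cmod (1 - \<tau>) * cmod (\<tau> + 2) / (cmod \<tau>)^2"
    by (simp add: norm_mult norm_divide norm_power norm_minus_commute)
  also have "\<dots> \<le> \<bar>\<eta>\<bar> / 2 * cmod (1 - \<tau>) * 3 / (cmod \<tau>)^2"
    using assms(1) \<open>cmod (\<tau> + 2) \<le> 3\<close> by (intro divide_right_mono mult_mono) auto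
  also have "\<dots> = 3 / 2 * cmod (1 - \<tau>) * (\<bar>\<eta>\<bar> / (cmod \<tau>)^2)" by simp
  also have "\<dots> \<le> 3 / 2 * cmod (1 - \<tau>) * (\<eta>^2 / 100)"
    using inv_sq by (intro mult_left_mono) auto
  also have "\<dots> = 3 / 200 * (\<eta>^2 * cmod (1 - \<tau>))" by simp
  finally have second: "Re (b * (\<tau> - 1) * (\<tau> + 2) / \<tau>^2) \<le> 3 / 200 * (\<eta>^2 * cmod (1 - \<tau>))" .
  have "Re (edge_phase \<eta> b \<tau>) =
        Re (- 2 * of_real (\<eta>^2) * (1 - \<tau>) / \<tau>) + Re (b * (\<tau> - 1) * (\<tau> + 2) / \<tau>^2)"
    unfolding edge_phase_def by simp
  moreover have "0 \<le> \<eta>^2 * cmod (1 - \<tau>)" by simp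
  ultimately show ?thesis using first second by linarith
qed

lemma norm_edge_phase_numer_ge:
  assumes "cmod b \<le> \<bar>\<eta>\<bar> / 2" "cmod \<tau> \<le> 1" "5/2 \<le> \<bar>\<eta>\<bar> * cmod \<tau>"
  shows "\<eta>^2 * cmod \<tau> \<le> cmod (edge_phase_numer \<eta> b \<tau>)"
proof -
  have "cmod (4 - \<tau>) \<le> 5" using norm_triangle_ineq4[of 4 \<tau>] assms(2) by simp
  then have "cmod (b * (4 - \<tau>)) \<le> \<bar>\<eta>\<bar> / 2 * 5"
    unfolding norm_mult using assms(1) by (intro mult_mono) auto
  also have "\<dots> \<le> \<bar>\<eta>\<bar> * (\<bar>\<eta>\<bar> * cmod \<tau>)" using mult_left_mono[OF assms(3), of "\<bar>\<eta>\<bar>"] by simp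
  also have "\<dots> = \<eta>^2 * cmod \<tau>" by (simp add: power2_eq_square abs_mult_self_eq)
  finally have "cmod (b * (4 - \<tau>)) \<le> \<eta>^2 * cmod \<tau>" .
  moreover have "cmod (edge_phase_numer \<eta> b \<tau>) \<ge> cmod (2 * of_real (\<eta>^2) * \<tau>) - cmod (b * (4 - \<tau>))"
    unfolding edge_phase_numer_def by (rule norm_diff_ineq)
  moreover have "cmod (2 * of_real (\<eta>^2) * \<tau>) = 2 * \<eta>^2 * cmod \<tau>"
    by (simp add: norm_mult norm_power)
  ultimately show ?thesis by linarith
qed

lemma norm_edge_boundary_term_le:
  assumes "cmod b \<le> \<bar>\<eta>\<bar> / 2" "cmod \<tau> \<le> 1" "5/2 \<le> \<bar>\<eta>\<bar> * cmod \<tau>"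
  shows "cmod (edge_boundary_term \<gamma> \<eta> b \<tau>) \<le> cmod (edge_integrand \<gamma> \<eta> b \<tau>) / \<eta>^2"
proof -
  have "\<tau> \<noteq> 0" "\<eta> \<noteq> 0" using assms(3) by auto
  have "0 < \<eta>^2 * cmod \<tau>" using \<open>\<tau> \<noteq> 0\<close> \<open>\<eta> \<noteq> 0\<close> by simp
  then have "(cmod \<tau>)^3 / cmod (edge_phase_numer \<eta> b \<tau>) \<le> (cmod \<tau>)^3 / (\<eta>^2 * cmod \<tau>)"
    using norm_edge_phase_numer_ge[OF assms] by (intro divide_left_mono mult_pos_pos) auto
  also have "\<dots> = (cmod \<tau>)^2 / \<eta>^2"
    using \<open>\<tau> \<noteq> 0\<close> by (simp add: field_simps power2_eq_square power3_eq_cube)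
  also have "\<dots> \<le> 1 / \<eta>^2"
    using assms(2) by (intro divide_right_mono) (auto simp: power_le_one)
  finally have "(cmod \<tau>)^3 / cmod (edge_phase_numer \<eta> b \<tau>) \<le> 1 / \<eta>^2" .
  then have "cmod (edge_integrand \<gamma> \<eta> b \<tau>) * ((cmod \<tau>)^3 / cmod (edge_phase_numer \<eta> b \<tau>))
      \<le> cmod (edge_integrand \<gamma> \<eta> b \<tau>) * (1 / \<eta>^2)"
    by (intro mult_left_mono) auto
  then show ?thesis
    unfolding edge_boundary_term_def by (simp add: norm_mult norm_divide norm_power mult.commute)
qed

lemma norm_edge_remainder_le:
  assumes "cmod b \<le> \<bar>\<eta>\<bar> / 2" "cmod \<tau> \<le> 1" "5/2 \<le> \<bar>\<eta>\<bar> * cmod \<tau>" "1 \<le> \<bar>\<eta>\<bar>"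
  shows "cmod (edge_remainder \<gamma> \<eta> b \<tau>)
           \<le> cmod (edge_integrand \<gamma> \<eta> b \<tau>) * ((5 * \<bar>3 - \<gamma>\<bar> + 3) / \<eta>^2)"
proof -
  define P where "P = edge_phase_numer \<eta> b \<tau>"
  define K where "K = 5 * \<bar>3 - \<gamma>\<bar> + 3"
  have "\<tau> \<noteq> 0" "\<eta> \<noteq> 0" using assms(3) by auto
  have "\<bar>\<eta>\<bar> \<le> \<eta>^2"
    using mult_left_mono[OF assms(4), of "\<bar>\<eta>\<bar>"] by (simp add: power2_eq_square abs_mult_self_eq)
  have "cmod (4 - \<tau>) \<le> 5" using norm_triangle_ineq4[of 4 \<tau>] assms(2) by simp
  then have "cmod (b * (4 - \<tau>)) \<le> \<bar>\<eta>\<bar> / 2 * 5"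
    unfolding norm_mult using assms(1) by (intro mult_mono) auto
  moreover have "cmod (2 * of_real (\<eta>^2) * \<tau>) \<le> 2 * \<eta>^2"
    using assms(2) by (simp add: norm_mult norm_power mult_left_le)
  ultimately have "cmod P \<le> 5 * \<eta>^2"
    using norm_triangle_ineq[of "2 * of_real (\<eta>^2) * \<tau>" "b * (4 - \<tau>)"] \<open>\<bar>\<eta>\<bar> \<le> \<eta>^2\<close>
    unfolding P_def edge_phase_numer_def by linarith
  have "cmod (2 * of_real (\<eta>^2) - b) \<le> 2 * \<eta>^2 + \<bar>\<eta>\<bar> / 2"
    using norm_triangle_ineq4[of "2 * of_real (\<eta>^2)" b] assms(1) by (simp add: norm_mult norm_power)
  then have "cmod (\<tau> * (2 * of_real (\<eta>^2) - b)) \<le> 1 * (2 * \<eta>^2 + \<bar>\<eta>\<bar> / 2)"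
    unfolding norm_mult using assms(2) by (intro mult_mono) auto
  moreover have "cmod (3 - of_real \<gamma>) = \<bar>3 - \<gamma>\<bar>"
    by (metis norm_of_real of_real_diff of_real_numeral)
  then have "cmod ((3 - of_real \<gamma>) * P) \<le> \<bar>3 - \<gamma>\<bar> * (5 * \<eta>^2)"
    unfolding norm_mult using \<open>cmod P \<le> 5 * \<eta>^2\<close> by (intro mult_mono) auto
  ultimately have Q: "cmod ((3 - of_real \<gamma>) * P - \<tau> * (2 * of_real (\<eta>^2) - b)) \<le> K * \<eta>^2"
    using norm_triangle_ineq4[of "(3 - of_real \<gamma>) * P" "\<tau> * (2 * of_real (\<eta>^2) - b)"] \<open>\<bar>\<eta>\<bar> \<le> \<eta>^2\<close>
    unfolding K_def by (simp add: algebra_simps)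
  have P_lower: "\<eta>^2 * cmod \<tau> \<le> cmod P" unfolding P_def by (rule norm_edge_phase_numer_ge[OF assms(1-3)])
  have "(cmod \<tau>)^2 * cmod ((3 - of_real \<gamma>) * P - \<tau> * (2 * of_real (\<eta>^2) - b)) / (cmod P)^2
      \<le> (cmod \<tau>)^2 * (K * \<eta>^2) / (\<eta>^2 * cmod \<tau>)^2"
    using Q P_lower \<open>\<tau> \<noteq> 0\<close> \<open>\<eta> \<noteq> 0\<close>
    by (intro frac_le mult_left_mono power_mono mult_nonneg_nonneg) (auto simp: K_def)
  also have "\<dots> = K / \<eta>^2"
    using \<open>\<tau> \<noteq> 0\<close> \<open>\<eta> \<noteq> 0\<close> by (simp add: field_simps power2_eq_square)
  finally have "cmod (edge_integrand \<gamma> \<eta> b \<tau>) *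
        ((cmod \<tau>)^2 * cmod ((3 - of_real \<gamma>) * P - \<tau> * (2 * of_real (\<eta>^2) - b)) / (cmod P)^2)
      \<le> cmod (edge_integrand \<gamma> \<eta> b \<tau>) * (K / \<eta>^2)"
    by (intro mult_left_mono) auto
  then show ?thesis
    unfolding edge_remainder_def P_def[symmetric] K_def[symmetric]
    by (simp add: norm_mult norm_divide norm_power mult_ac)
qed

lemma norm_edge_boundary_term_one_approx:
  assumes "cmod b \<le> \<bar>\<eta>\<bar> / 2" "2 \<le> \<bar>\<eta>\<bar>"
  shows "cmod (edge_boundary_term \<gamma> \<eta> b 1 - 1 / (2 * of_real (\<eta>^2))) \<le> 1 / \<bar>\<eta>\<bar>^3"
proof -
  define E :: complex where "E = 2 * of_real (\<eta>^2)"
  have "\<eta> \<noteq> 0" using assms(2) by auto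
  have norm_E: "cmod E = 2 * \<eta>^2" unfolding E_def by (simp add: norm_mult norm_power)
  have "2 * \<bar>\<eta>\<bar> \<le> \<eta>^2"
    using mult_right_mono[OF assms(2), of "\<bar>\<eta>\<bar>"] by (simp add: power2_eq_square abs_mult_self_eq)
  moreover have "cmod (E + 3 * b) \<ge> cmod E - cmod (3 * b)" by (rule norm_diff_ineq)
  moreover have "cmod (3 * b) \<le> 3 * (\<bar>\<eta>\<bar> / 2)" using assms(1) by (simp add: norm_mult)
  ultimately have norm_denom: "\<eta>^2 \<le> cmod (E + 3 * b)" using norm_E by linarith
  then have "E + 3 * b \<noteq> 0" "E \<noteq> 0" using \<open>\<eta> \<noteq> 0\<close> by (auto simp: E_def)
  have "edge_boundary_term \<gamma> \<eta> b 1 = 1 / (E + 3 * b)"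
    unfolding edge_boundary_term_def edge_integrand_def edge_phase_def edge_phase_numer_def E_def by simp
  moreover have "1 / (E + 3 * b) - 1 / E = - (3 * b) / ((E + 3 * b) * E)"
    using \<open>E + 3 * b \<noteq> 0\<close> \<open>E \<noteq> 0\<close> by (simp add: field_simps)
  ultimately have "edge_boundary_term \<gamma> \<eta> b 1 - 1 / E = - (3 * b) / ((E + 3 * b) * E)" by simp
  then have "cmod (edge_boundary_term \<gamma> \<eta> b 1 - 1 / E) = cmod (3 * b) / (cmod (E + 3 * b) * (2 * \<eta>^2))"
    by (simp add: norm_divide norm_mult norm_E)
  also have "\<dots> \<le> (3 * (\<bar>\<eta>\<bar> / 2)) / (\<eta>^2 * (2 * \<eta>^2))"
    using assms(1) norm_denom \<open>\<eta> \<noteq> 0\<close> by (intro frac_le mult_mono) (auto simp: norm_mult)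
  also have "\<dots> = (3 / 4) / \<bar>\<eta>\<bar>^3"
    using \<open>\<eta> \<noteq> 0\<close> by (simp add: field_simps power2_eq_square power3_eq_cube abs_mult_self_eq)
  also have "\<dots> \<le> 1 / \<bar>\<eta>\<bar>^3" by (intro divide_right_mono) auto
  finally show ?thesis unfolding E_def .
qed

lemma powr_neg_le_powr_abs:
  fixes r x \<gamma> :: real
  assumes "0 < r" "r \<le> x" "x \<le> 1"
  shows "x powr (- \<gamma>) \<le> r powr (- \<bar>\<gamma>\<bar>)"
proof (cases "\<gamma> \<ge> 0")
  case True
  then show ?thesis using assms by (simp add: powr_mono2')
next
  case False
  have "x powr (- \<gamma>) \<le> 1" using False assms by (intro powr_le1) auto
  moreover have "1 powr \<gamma> \<le> r powr \<gamma>" using False assms by (intro powr_mono2') auto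
  ultimately show ?thesis using False by simp
qed

lemma powr_mult_exp_le_inverse:
  fixes s r \<gamma> c :: real
  assumes "0 < c" "1 \<le> s" "c * (\<bar>\<gamma>\<bar> + 1) \<le> s" "1 / s \<le> r" "r \<le> 1"
  shows "r powr (- \<bar>\<gamma>\<bar>) * exp (- (s^2 / c)) \<le> 1 / s"
proof -
  have "0 < s" using assms(2) by simp
  have "r powr (- \<bar>\<gamma>\<bar>) \<le> (1 / s) powr (- \<bar>\<gamma>\<bar>)"
    using assms \<open>0 < s\<close> by (intro powr_mono2') auto
  also have "\<dots> = s powr \<bar>\<gamma>\<bar>" using \<open>0 < s\<close> by (simp add: powr_minus_divide powr_divide)
  finally have "r powr (- \<bar>\<gamma>\<bar>) \<le> s powr \<bar>\<gamma>\<bar>" .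
  have "(\<bar>\<gamma>\<bar> + 1) * ln s \<le> (\<bar>\<gamma>\<bar> + 1) * s"
    using ln_less_self[OF \<open>0 < s\<close>] by (intro mult_left_mono) auto
  also have "\<dots> \<le> s / c * s" using assms(1,3) \<open>0 < s\<close> by (intro mult_right_mono) (auto simp: field_simps)
  finally have "exp ((\<bar>\<gamma>\<bar> + 1) * ln s) \<le> exp (s^2 / c)" by (simp add: power2_eq_square)
  moreover have "s powr \<bar>\<gamma>\<bar> * s = exp ((\<bar>\<gamma>\<bar> + 1) * ln s)"
    using \<open>0 < s\<close> by (simp add: powr_def exp_add distrib_right)
  ultimately have "s powr \<bar>\<gamma>\<bar> * s \<le> exp (s^2 / c)" by simp
  then have "s powr \<bar>\<gamma>\<bar> * exp (- (s^2 / c)) \<le> 1 / s"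
    using \<open>0 < s\<close> by (simp add: exp_minus field_simps)
  moreover have "r powr (- \<bar>\<gamma>\<bar>) * exp (- (s^2 / c)) \<le> s powr \<bar>\<gamma>\<bar> * exp (- (s^2 / c))"
    using \<open>r powr (- \<bar>\<gamma>\<bar>) \<le> s powr \<bar>\<gamma>\<bar>\<close> by (intro mult_right_mono) auto
  ultimately show ?thesis by linarith
qed

lemma has_integral_exp_decay:
  fixes l lo hi :: real
  assumes "0 < l" "lo \<le> hi"
  shows "((\<lambda>t. exp (- l * (hi - t))) has_integral (1 - exp (- l * (hi - lo))) / l) {lo..hi}"
proof -
  have "((\<lambda>t. exp (- l * (hi - t))) has_integral
          exp (- l * (hi - hi)) / l - exp (- l * (hi - lo)) / l) {lo..hi}"
  proof (rule fundamental_theorem_of_calculus[OF assms(2)])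
    fix x assume "x \<in> {lo..hi}"
    have "((\<lambda>t. exp (- l * (hi - t)) / l) has_real_derivative
            exp (- l * (hi - x)) * (- l * (0 - 1)) / l) (at x)"
      by (auto intro!: derivative_eq_intros)
    then show "((\<lambda>t. exp (- l * (hi - t)) / l) has_vector_derivative exp (- l * (hi - x)))
                 (at x within {lo..hi})"
      using assms
      by (auto simp: has_real_derivative_iff_has_vector_derivative intro: has_vector_derivative_at_within)
  qed
  then show ?thesis by (simp add: diff_divide_distrib)
qed

lemma inverse_abs_mult_divide_square: "1 / \<bar>x\<bar> * (c / x^2) = c / \<bar>x\<bar>^3" for x c :: real
  by (simp add: power3_eq_cube power2_eq_square field_simps)

lemma norm_edge_integrand_le:
  assumes "cmod b \<le> \<bar>\<eta>\<bar> / 2" "0 < r" "r \<le> cmod \<tau>" "cmod \<tau> \<le> 1" "100 \<le> \<bar>\<eta>\<bar> * r^2"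
    and "cmod (1 - \<tau>) / 25 \<le> Re ((1 - \<tau>) / \<tau>)"
  shows "cmod (edge_integrand \<gamma> \<eta> b \<tau>) \<le> r powr (- \<bar>\<gamma>\<bar>) * exp (- (\<eta>^2 * cmod (1 - \<tau>) / 20))"
proof -
  have "\<bar>\<eta>\<bar> * r^2 \<le> \<bar>\<eta>\<bar> * (cmod \<tau>)^2" using assms(2,3) by (intro mult_left_mono power_mono) auto
  then have "Re (edge_phase \<eta> b \<tau>) \<le> - (\<eta>^2 * cmod (1 - \<tau>) / 20)"
    using assms by (intro Re_edge_phase_le) auto
  moreover have "cmod \<tau> powr (- \<gamma>) \<le> r powr (- \<bar>\<gamma>\<bar>)" using assms(2-4) by (rule powr_neg_le_powr_abs)
  ultimately show ?thesis unfolding norm_edge_integrand by (intro mult_mono) auto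
qed

section \<open>The contour Omega\<close>

definition kappa :: real where "kappa = 1 / (3 * sqrt 3)"

lemma kappa_bounds: "24/125 < kappa" "kappa < 193/1000" "kappa^2 = 1/27"
proof -
  have "1.73 < sqrt 3" by (rule real_less_rsqrt) (simp add: power2_eq_square)
  moreover have "sqrt 3 < 1.7321" by (rule real_less_lsqrt) (simp_all add: power2_eq_square)
  ultimately show "24/125 < kappa" "kappa < 193/1000" unfolding kappa_def by (simp_all add: field_simps)
  show "kappa^2 = 1/27" unfolding kappa_def by (simp add: power2_eq_square field_simps)
qed

lemma Omega_p1_eq: "Omega_p1 = Complex kappa (- 1/3)"
  unfolding Omega_p1_def kappa_def by simp

lemma Omega_p2_eq: "Omega_p2 = Complex (1 - kappa) (- 1/3)"
  unfolding Omega_p2_def kappa_def by simp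

lemma Omega_path_first: "t \<le> 1/2 \<Longrightarrow> Omega_path t = of_real t * (2 * Omega_p1)"
  unfolding Omega_path_def joinpaths_def linepath_def by (simp add: scaleR_conv_of_real)

lemma Omega_path_second:
  assumes "1/2 \<le> t" "t \<le> 3/4"
  shows "Omega_path t = (3 * Omega_p1 - 2 * Omega_p2) + of_real t * (4 * (Omega_p2 - Omega_p1))"
proof (cases "t = 1/2")
  case False
  with assms have "\<not> t \<le> 1/2" "2 * t - 1 \<le> 1/2" by auto
  then show ?thesis
    unfolding Omega_path_def joinpaths_def linepath_def by (simp add: scaleR_conv_of_real algebra_simps)
next
  case True
  show ?thesis
    unfolding True Omega_path_def joinpaths_def linepath_def by (simp add: scaleR_conv_of_real algebra_simps)
qed

lemma Omega_path_third:
  assumes "3/4 \<le> t"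
  shows "Omega_path t = (4 * Omega_p2 - 3) + of_real t * (4 * (1 - Omega_p2))"
proof (cases "t = 3/4")
  case False
  with assms have "\<not> t \<le> 1/2" "\<not> 2 * t - 1 \<le> 1/2" by auto
  then show ?thesis
    unfolding Omega_path_def joinpaths_def linepath_def by (simp add: scaleR_conv_of_real algebra_simps)
next
  case True
  show ?thesis
    unfolding True Omega_path_def joinpaths_def linepath_def by (simp add: scaleR_conv_of_real algebra_simps)
qed

lemma Re_one_minus_div_ge:
  assumes "\<tau> \<noteq> 0" "cmod \<tau> \<le> 1" "(cmod \<tau>)^2 \<le> Re \<tau>"
  shows "Re \<tau> - (cmod \<tau>)^2 \<le> Re ((1 - \<tau>) / \<tau>)"
proof -
  have "(Re \<tau> - (cmod \<tau>)^2) * (cmod \<tau>)^2 \<le> Re \<tau> - (cmod \<tau>)^2"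
    using assms(2,3) by (intro mult_left_le) (auto simp: power_le_one)
  then show ?thesis using assms(1) by (simp add: Re_one_minus_div field_simps)
qed

text \<open>
  Re ((1 - tau) / tau) = Re (1 / tau) - 1 is positive exactly on the disc |tau - 1/2| < 1/2;
  Omega runs inside this disc and touches its boundary only at 0 and 1.
\<close>

lemma Omega_path_first_facts:
  assumes "0 < t" "t \<le> 1/2"
  defines "\<tau> \<equiv> Omega_path t"
  shows "cmod \<tau> = 4 * kappa * t" "0 < Re \<tau>" "cmod \<tau> \<le> 1" "1/3 \<le> cmod (1 - \<tau>)"
    and "cmod (1 - \<tau>) / 25 \<le> Re ((1 - \<tau>) / \<tau>)"
proof -
  note k = kappa_bounds
  have re: "Re \<tau> = 2 * kappa * t" and im: "Im \<tau> = - 2 * t / 3"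
    unfolding \<tau>_def Omega_path_first[OF assms(2)] Omega_p1_eq by simp_all
  have "(cmod \<tau>)^2 = (4 * kappa * t)^2"
    unfolding cmod_power2 re im using k(3) by (simp add: power2_eq_square field_simps)
  then show norm: "cmod \<tau> = 4 * kappa * t" using assms(1) k by (simp add: power2_eq_iff_nonneg)
  show "0 < Re \<tau>" unfolding re using assms(1) k by simp
  then have "\<tau> \<noteq> 0" by auto
  have kt: "kappa * t \<le> 193/1000 * (1/2)" using assms k by (intro mult_mono) auto
  then show "cmod \<tau> \<le> 1" unfolding norm by simp
  have "1/3 \<le> Re (1 - \<tau>)" unfolding minus_complex.sel re using kt by simp
  then show "1/3 \<le> cmod (1 - \<tau>)" using complex_Re_le_cmod order_trans by blast
  have "(cmod (1 - \<tau>))^2 = 1 - 4 * kappa * t * (1 - 4 * kappa * t)"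
    unfolding cmod_power2 minus_complex.sel re im using k(3) by (simp add: power2_eq_square field_simps)
  also have "\<dots> \<le> 1"
    using mult_nonneg_nonneg[of "4 * kappa * t" "1 - 4 * kappa * t"] kt assms k by simp
  finally have "cmod (1 - \<tau>) / 25 \<le> 1 / 25" by (simp add: power_le_one_iff)
  also have "\<dots> \<le> 1 / (4 * kappa) - 1" using k by (simp add: field_simps)
  also have "\<dots> \<le> 1 / (8 * kappa * t) - 1" using assms k by (simp add: field_simps)
  also have "\<dots> = Re ((1 - \<tau>) / \<tau>)"
    using assms(1) k by (simp add: Re_one_minus_div[OF \<open>\<tau> \<noteq> 0\<close>] norm re field_simps power2_eq_square)
  finally show "cmod (1 - \<tau>) / 25 \<le> Re ((1 - \<tau>) / \<tau>)" .
qed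

lemma Omega_path_second_facts:
  assumes "1/2 \<le> t" "t \<le> 3/4"
  defines "\<tau> \<equiv> Omega_path t"
  shows "1/6 < cmod \<tau>" "0 < Re \<tau>" "cmod \<tau> \<le> 1" "1/3 \<le> cmod (1 - \<tau>)"
    and "cmod (1 - \<tau>) / 25 \<le> Re ((1 - \<tau>) / \<tau>)"
proof -
  note k = kappa_bounds
  define x where "x = Re \<tau>"
  have x: "x = 5 * kappa - 2 + 4 * t * (1 - 2 * kappa)" and im: "Im \<tau> = - 1/3"
    unfolding x_def \<tau>_def Omega_path_second[OF assms(1,2)] Omega_p1_eq Omega_p2_eq
    by (simp_all add: algebra_simps)
  have "0 \<le> (4 * t - 2) * (1 - 2 * kappa)" "0 \<le> (3 - 4 * t) * (1 - 2 * kappa)"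
    using assms k by (intro mult_nonneg_nonneg; simp)+
  then have x_lower: "kappa \<le> x" and x_upper: "x \<le> 1 - kappa" unfolding x by (simp_all add: algebra_simps)
  have norm_sq: "(cmod \<tau>)^2 = x^2 + 1/9" unfolding cmod_power2 x_def im by (simp add: power2_eq_square)
  show "1/6 < cmod \<tau>" "0 < Re \<tau>" using abs_Re_le_cmod[of \<tau>] x_lower k by (simp_all add: x_def[symmetric])
  then have "\<tau> \<noteq> 0" by auto
  have "x * x \<le> 81/100 * (81/100)" using x_lower x_upper k by (intro mult_mono) auto
  then have "(cmod \<tau>)^2 \<le> 1" unfolding norm_sq by (simp add: power2_eq_square)
  then show "cmod \<tau> \<le> 1" by (simp add: power_le_one_iff)
  show "1/3 \<le> cmod (1 - \<tau>)" using abs_Im_le_cmod[of "1 - \<tau>"] im by simp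
  have "0 \<le> (x - kappa) * (1 - kappa - x)" using x_lower x_upper by (intro mult_nonneg_nonneg) auto
  then have "kappa - kappa^2 - 1/9 \<le> x - (cmod \<tau>)^2"
    unfolding norm_sq by (simp add: algebra_simps power2_eq_square)
  moreover have "1/25 \<le> kappa - kappa^2 - 1/9" using k by simp
  ultimately have "1/25 \<le> Re \<tau> - (cmod \<tau>)^2" unfolding x_def by linarith
  moreover have "(cmod (1 - \<tau>))^2 \<le> 1"
    unfolding cmod_power2 minus_complex.sel x_def[symmetric] im
    using x_lower x_upper k mult_mono[of "1 - x" "1 - kappa" "1 - x" "1 - kappa"]
    by (simp add: power2_eq_square algebra_simps)
  ultimately show "cmod (1 - \<tau>) / 25 \<le> Re ((1 - \<tau>) / \<tau>)"
    using Re_one_minus_div_ge[OF \<open>\<tau> \<noteq> 0\<close> \<open>cmod \<tau> \<le> 1\<close>] by (simp add: power_le_one_iff)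
qed

lemma Omega_path_third_facts:
  assumes "3/4 \<le> t" "t \<le> 1"
  defines "\<tau> \<equiv> Omega_path t"
  shows "1/2 \<le> cmod \<tau>" "0 < Re \<tau>" "cmod \<tau> \<le> 1" "3/2 * (1 - t) \<le> cmod (1 - \<tau>)"
    and "cmod (1 - \<tau>) / 25 \<le> Re ((1 - \<tau>) / \<tau>)"
proof -
  note k = kappa_bounds
  define w where "w = 4 - 4 * t"
  have w: "0 \<le> w" "w \<le> 1" unfolding w_def using assms by auto
  have re: "Re \<tau> = 1 - kappa * w" and im: "Im \<tau> = - w / 3"
    unfolding w_def \<tau>_def Omega_path_third[OF assms(1)] Omega_p2_eq by (simp_all add: algebra_simps)
  have "kappa * w \<le> 193/1000 * 1" using w k by (intro mult_mono) auto
  then show "0 < Re \<tau>" "1/2 \<le> cmod \<tau>" using abs_Re_le_cmod[of \<tau>] unfolding re by simp_all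
  then have "\<tau> \<noteq> 0" by auto
  have "(cmod (1 - \<tau>))^2 = (2 * kappa * w)^2"
    unfolding cmod_power2 minus_complex.sel re im using k(3) by (simp add: power2_eq_square field_simps)
  then have dist: "cmod (1 - \<tau>) = 2 * kappa * w" using w k by (simp add: power2_eq_iff_nonneg)
  have "3/2 * (1 - t) \<le> 8 * kappa * (1 - t)" using assms k by (intro mult_right_mono) auto
  also have "\<dots> = cmod (1 - \<tau>)" unfolding dist w_def by simp
  finally show "3/2 * (1 - t) \<le> cmod (1 - \<tau>)" .
  have norm_sq: "(cmod \<tau>)^2 = 1 - 2 * kappa * w + (2 * kappa * w)^2"
    unfolding cmod_power2 re im using k(3) by (simp add: power2_eq_square field_simps)
  have "(2 * kappa * w) * (2 * kappa * w) \<le> 2 * kappa * w"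
    using \<open>kappa * w \<le> 193/1000 * 1\<close> w k by (intro mult_left_le) auto
  then have "(2 * kappa * w)^2 \<le> 2 * kappa * w" by (simp add: power2_eq_square)
  then have "(cmod \<tau>)^2 \<le> 1" unfolding norm_sq by simp
  then show "cmod \<tau> \<le> 1" by (simp add: power_le_one_iff)
  have "0 \<le> kappa * w * (23/25 - 4 * (kappa * w))"
    using \<open>kappa * w \<le> 193/1000 * 1\<close> w k by (intro mult_nonneg_nonneg) auto
  then have "2 * kappa * w / 25 \<le> kappa * w - (2 * kappa * w)^2"
    by (simp add: algebra_simps power2_eq_square)
  then have "cmod (1 - \<tau>) / 25 \<le> Re \<tau> - (cmod \<tau>)^2" unfolding dist norm_sq re by simp
  moreover have "(cmod \<tau>)^2 \<le> Re \<tau>"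
    using \<open>cmod (1 - \<tau>) / 25 \<le> Re \<tau> - (cmod \<tau>)^2\<close> norm_ge_zero[of "1 - \<tau>"] by linarith
  ultimately show "cmod (1 - \<tau>) / 25 \<le> Re ((1 - \<tau>) / \<tau>)"
    using Re_one_minus_div_ge[OF \<open>\<tau> \<noteq> 0\<close> \<open>cmod \<tau> \<le> 1\<close>] by linarith
qed

lemma Omega_path_bounds:
  assumes "0 < t" "t \<le> 1"
  defines "\<tau> \<equiv> Omega_path t"
  shows "0 < Re \<tau>" "cmod \<tau> \<le> 1" "cmod (1 - \<tau>) / 25 \<le> Re ((1 - \<tau>) / \<tau>)"
proof -
  consider "t \<le> 1/2" | "1/2 \<le> t" "t \<le> 3/4" | "3/4 \<le> t" by linarith
  then have "0 < Re \<tau> \<and> cmod \<tau> \<le> 1 \<and> cmod (1 - \<tau>) / 25 \<le> Re ((1 - \<tau>) / \<tau>)"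
  proof cases
    case 1
    show ?thesis using Omega_path_first_facts[OF assms(1) 1] unfolding \<tau>_def by blast
  next
    case 2
    show ?thesis using Omega_path_second_facts[OF 2] unfolding \<tau>_def by blast
  next
    case 3
    show ?thesis using Omega_path_third_facts[OF 3 assms(2)] unfolding \<tau>_def by blast
  qed
  then show "0 < Re \<tau>" "cmod \<tau> \<le> 1" "cmod (1 - \<tau>) / 25 \<le> Re ((1 - \<tau>) / \<tau>)" by auto
qed

lemma norm_Omega_path_gt:
  assumes "1/2 < t" "t \<le> 1"
  shows "1/6 < cmod (Omega_path t)"
proof (cases "t \<le> 3/4")
  case True
  then show ?thesis using Omega_path_second_facts(1) assms(1) by simp
next
  case False
  then show ?thesis using Omega_path_third_facts(1)[of t] assms(2) by simp
qed

lemma norm_Omega_path_ge: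
  assumes "0 < r" "r \<le> 1/6" "r / (4 * kappa) \<le> t" "t \<le> 1"
  shows "r \<le> cmod (Omega_path t)"
proof (cases "t \<le> 1/2")
  case True
  have "0 < r / (4 * kappa)" using assms(1) kappa_bounds by simp
  then have "0 < t" using assms(3) by linarith
  then have "cmod (Omega_path t) = 4 * kappa * t" using Omega_path_first_facts(1) True by blast
  then show ?thesis using assms(3) kappa_bounds by (simp add: field_simps)
next
  case False
  then show ?thesis using norm_Omega_path_gt[of t] assms(2,4) by simp
qed

lemma path_part_domain_Omega_annulus:
  assumes "0 < r" "r \<le> 1/6"
  shows "path_part_domain Omega_path {\<tau> \<in> Omega. r < cmod \<tau>} = {r / (4 * kappa)<..1}"
proof -
  note k = kappa_bounds
  have "0 < r / (4 * kappa)" "r / (4 * kappa) < 1/2" using assms k by (simp_all add: field_simps)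
  have "0 \<le> t \<and> t \<le> 1 \<and> r < cmod (Omega_path t) \<longleftrightarrow> r / (4 * kappa) < t \<and> t \<le> 1" for t
  proof -
    consider "t \<le> 0" | "0 < t" "t \<le> 1/2" | "1/2 < t" by linarith
    then show ?thesis
    proof cases
      case 1
      have "Omega_path 0 = 0" by (simp add: Omega_path_first)
      then have "\<not> (0 \<le> t \<and> r < cmod (Omega_path t))" using 1 assms(1) by (cases "t = 0") auto
      moreover have "\<not> r / (4 * kappa) < t" using 1 \<open>0 < r / (4 * kappa)\<close> by linarith
      ultimately show ?thesis by blast
    next
      case 2
      then have "r < cmod (Omega_path t) \<longleftrightarrow> r / (4 * kappa) < t"
        using Omega_path_first_facts(1)[OF 2] k by (simp add: field_simps)
      then show ?thesis using 2 by auto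
    next
      case 3
      then show ?thesis using norm_Omega_path_gt[OF 3] assms(2) \<open>r / (4 * kappa) < 1/2\<close> by auto
    qed
  qed
  moreover have "Omega_path t \<in> Omega" if "t \<in> {0..1}" for t
    unfolding Omega_def path_image_def using that by blast
  ultimately show ?thesis unfolding path_part_domain_def by (intro set_eqI) (simp, blast)
qed

lemma norm_Omega_piece_velocities:
  "cmod (2 * Omega_p1) \<le> 1" "cmod (4 * (Omega_p2 - Omega_p1)) \<le> 4" "cmod (4 * (1 - Omega_p2)) \<le> 2"
proof -
  note k = kappa_bounds
  have "(cmod (2 * Omega_p1))^2 = (4 * kappa)^2"
    unfolding cmod_power2 Omega_p1_eq using k(3) by (simp add: power2_eq_square field_simps)
  then have "cmod (2 * Omega_p1) = 4 * kappa" by (rule power2_eq_imp_eq) (use k in auto)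
  have "(cmod (4 * (1 - Omega_p2)))^2 = (8 * kappa)^2"
    unfolding cmod_power2 Omega_p2_eq using k(3) by (simp add: power2_eq_square field_simps)
  then have "cmod (4 * (1 - Omega_p2)) = 8 * kappa" by (rule power2_eq_imp_eq) (use k in auto)
  then show "cmod (2 * Omega_p1) \<le> 1" "cmod (4 * (1 - Omega_p2)) \<le> 2"
    using \<open>cmod (2 * Omega_p1) = 4 * kappa\<close> k by simp_all
  have "4 * (Omega_p2 - Omega_p1) = of_real (4 * (1 - 2 * kappa))"
    unfolding Omega_p1_eq Omega_p2_eq by (simp add: complex_eq_iff)
  then have "cmod (4 * (Omega_p2 - Omega_p1)) = \<bar>4 * (1 - 2 * kappa)\<bar>" by (simp only: norm_of_real)
  then show "cmod (4 * (Omega_p2 - Omega_p1)) \<le> 4" using k by simp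
qed

section \<open>Estimates along the truncated contour\<close>

text \<open>
  Below, r plays the role of the truncation radius C |eta|^(-1/2). Since
  |Omega_path t| = 4 kappa t on the first segment, the truncated contour is parametrised by
  t in (r / (4 kappa), 1].
\<close>

context
  fixes \<gamma> \<eta> r :: real and b :: complex
  assumes b_le: "cmod b \<le> \<bar>\<eta>\<bar> / 2" and \<eta>_large: "60 * (\<bar>\<gamma>\<bar> + 1) \<le> \<bar>\<eta>\<bar>"
    and r_pos: "0 < r" and r_le: "r \<le> 1/6" and r_large: "100 \<le> \<bar>\<eta>\<bar> * r^2" and r_ge: "1 / \<bar>\<eta>\<bar> \<le> r"
begin

lemma Omega_path_annulus_facts:
  assumes "t \<in> {r / (4 * kappa)..1}"
  defines "\<tau> \<equiv> Omega_path t"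
  shows "\<tau> \<notin> \<real>\<^sub>\<le>\<^sub>0" "edge_phase_numer \<eta> b \<tau> \<noteq> 0"
    and "cmod (edge_boundary_term \<gamma> \<eta> b \<tau>) \<le> cmod (edge_integrand \<gamma> \<eta> b \<tau>) / \<eta>^2"
    and "cmod (edge_remainder \<gamma> \<eta> b \<tau>) \<le> cmod (edge_integrand \<gamma> \<eta> b \<tau>) * ((5 * \<bar>3 - \<gamma>\<bar> + 3) / \<eta>^2)"
    and "cmod (edge_integrand \<gamma> \<eta> b \<tau>) \<le> r powr (- \<bar>\<gamma>\<bar>) * exp (- (\<eta>^2 * cmod (1 - \<tau>) / 20))"
proof -
  have "0 < r / (4 * kappa)" using r_pos kappa_bounds by simp
  then have t: "0 < t" "t \<le> 1" using assms(1) by auto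
  note bounds = Omega_path_bounds[OF t, folded \<tau>_def]
  have "r \<le> cmod \<tau>" unfolding \<tau>_def using norm_Omega_path_ge r_pos r_le assms(1) by auto
  have "1 \<le> \<bar>\<eta>\<bar>" using \<eta>_large by simp
  have "\<bar>\<eta>\<bar> * r * r \<le> \<bar>\<eta>\<bar> * r * 1" using r_pos r_le by (intro mult_left_mono) auto
  then have "100 \<le> \<bar>\<eta>\<bar> * r" using r_large by (simp add: power2_eq_square mult_ac)
  also have "\<dots> \<le> \<bar>\<eta>\<bar> * cmod \<tau>" using \<open>r \<le> cmod \<tau>\<close> by (intro mult_left_mono) auto
  finally have "5/2 \<le> \<bar>\<eta>\<bar> * cmod \<tau>" by simp
  show "\<tau> \<notin> \<real>\<^sub>\<le>\<^sub>0" using bounds(1) by (auto simp: complex_nonpos_Reals_iff)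
  have "0 < \<eta>^2 * cmod \<tau>" using \<open>1 \<le> \<bar>\<eta>\<bar>\<close> r_pos \<open>r \<le> cmod \<tau>\<close> by (intro mult_pos_pos) auto
  then show "edge_phase_numer \<eta> b \<tau> \<noteq> 0"
    using norm_edge_phase_numer_ge[OF b_le bounds(2) \<open>5/2 \<le> \<bar>\<eta>\<bar> * cmod \<tau>\<close>] by auto
  show "cmod (edge_boundary_term \<gamma> \<eta> b \<tau>) \<le> cmod (edge_integrand \<gamma> \<eta> b \<tau>) / \<eta>^2"
    by (rule norm_edge_boundary_term_le[OF b_le bounds(2) \<open>5/2 \<le> \<bar>\<eta>\<bar> * cmod \<tau>\<close>])
  show "cmod (edge_remainder \<gamma> \<eta> b \<tau>) \<le> cmod (edge_integrand \<gamma> \<eta> b \<tau>) * ((5 * \<bar>3 - \<gamma>\<bar> + 3) / \<eta>^2)"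
    by (rule norm_edge_remainder_le[OF b_le bounds(2) \<open>5/2 \<le> \<bar>\<eta>\<bar> * cmod \<tau>\<close> \<open>1 \<le> \<bar>\<eta>\<bar>\<close>])
  show "cmod (edge_integrand \<gamma> \<eta> b \<tau>) \<le> r powr (- \<bar>\<gamma>\<bar>) * exp (- (\<eta>^2 * cmod (1 - \<tau>) / 20))"
    by (rule norm_edge_integrand_le[OF b_le r_pos \<open>r \<le> cmod \<tau>\<close> bounds(2) r_large bounds(3)])
qed

lemma norm_edge_integrand_Omega_far:
  assumes "t \<in> {r / (4 * kappa)..3/4}"
  shows "cmod (edge_integrand \<gamma> \<eta> b (Omega_path t)) \<le> 1 / \<bar>\<eta>\<bar>"
proof -
  have "0 < r / (4 * kappa)" using r_pos kappa_bounds by simp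
  then have "0 < t" using assms by auto
  then have "1/3 \<le> cmod (1 - Omega_path t)"
    using Omega_path_first_facts(4)[of t] Omega_path_second_facts(4)[of t] assms by (cases "t \<le> 1/2") auto
  then have "\<eta>^2 * (1/3) \<le> \<eta>^2 * cmod (1 - Omega_path t)" by (intro mult_left_mono) auto
  then have "exp (- (\<eta>^2 * cmod (1 - Omega_path t) / 20)) \<le> exp (- (\<bar>\<eta>\<bar>^2 / 60))" by simp
  moreover have "cmod (edge_integrand \<gamma> \<eta> b (Omega_path t))
      \<le> r powr (- \<bar>\<gamma>\<bar>) * exp (- (\<eta>^2 * cmod (1 - Omega_path t) / 20))"
    using Omega_path_annulus_facts(5)[of t] assms by simp
  ultimately have "cmod (edge_integrand \<gamma> \<eta> b (Omega_path t)) \<le> r powr (- \<bar>\<gamma>\<bar>) * exp (- (\<bar>\<eta>\<bar>^2 / 60))"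
    by (meson mult_left_mono order_trans powr_ge_zero)
  also have "\<dots> \<le> 1 / \<bar>\<eta>\<bar>" using \<eta>_large r_ge r_le by (intro powr_mult_exp_le_inverse) auto
  finally show ?thesis .
qed

lemma norm_edge_integrand_Omega_near:
  assumes "t \<in> {3/4..1}"
  shows "cmod (edge_integrand \<gamma> \<eta> b (Omega_path t)) \<le> 2 powr \<bar>\<gamma>\<bar> * exp (- (3 * \<eta>^2 / 40) * (1 - t))"
proof -
  note facts = Omega_path_third_facts[of t]
  have "r^2 \<le> (1/2)^2" using r_pos r_le by (intro power_mono) auto
  then have "100 \<le> \<bar>\<eta>\<bar> * (1/2)^2" using r_large mult_left_mono[of "r^2" "(1/2)^2" "\<bar>\<eta>\<bar>"] by simp
  then have "cmod (edge_integrand \<gamma> \<eta> b (Omega_path t))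
      \<le> (1/2) powr (- \<bar>\<gamma>\<bar>) * exp (- (\<eta>^2 * cmod (1 - Omega_path t) / 20))"
    using assms facts by (intro norm_edge_integrand_le[OF b_le]) auto
  also have "\<dots> \<le> 2 powr \<bar>\<gamma>\<bar> * exp (- (3 * \<eta>^2 / 40) * (1 - t))"
  proof -
    have "\<eta>^2 * (3/2 * (1 - t)) \<le> \<eta>^2 * cmod (1 - Omega_path t)"
      using assms facts(4) by (intro mult_left_mono) auto
    then show ?thesis by (simp add: powr_minus_divide powr_divide algebra_simps)
  qed
  finally show ?thesis .
qed

lemma norm_edge_remainder_Omega_far:
  assumes "t \<in> {r / (4 * kappa)..3/4}"
  shows "cmod (edge_remainder \<gamma> \<eta> b (Omega_path t)) \<le> (5 * \<bar>3 - \<gamma>\<bar> + 3) / \<bar>\<eta>\<bar>^3"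
proof -
  have "cmod (edge_remainder \<gamma> \<eta> b (Omega_path t))
      \<le> cmod (edge_integrand \<gamma> \<eta> b (Omega_path t)) * ((5 * \<bar>3 - \<gamma>\<bar> + 3) / \<eta>^2)"
    using Omega_path_annulus_facts(4)[of t] assms by simp
  also have "\<dots> \<le> 1 / \<bar>\<eta>\<bar> * ((5 * \<bar>3 - \<gamma>\<bar> + 3) / \<eta>^2)"
    using norm_edge_integrand_Omega_far[OF assms] by (intro mult_right_mono) auto
  also have "\<dots> = (5 * \<bar>3 - \<gamma>\<bar> + 3) / \<bar>\<eta>\<bar>^3" by (rule inverse_abs_mult_divide_square)
  finally show ?thesis .
qed

lemma norm_edge_remainder_Omega_near:
  assumes "t \<in> {3/4..1}"
  shows "cmod (edge_remainder \<gamma> \<eta> b (Omega_path t))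
           \<le> 2 powr \<bar>\<gamma>\<bar> * exp (- (3 * \<eta>^2 / 40) * (1 - t)) * ((5 * \<bar>3 - \<gamma>\<bar> + 3) / \<eta>^2)"
proof -
  have "r / (4 * kappa) \<le> 3/4" using r_pos r_le kappa_bounds by (simp add: field_simps)
  then have "cmod (edge_remainder \<gamma> \<eta> b (Omega_path t))
      \<le> cmod (edge_integrand \<gamma> \<eta> b (Omega_path t)) * ((5 * \<bar>3 - \<gamma>\<bar> + 3) / \<eta>^2)"
    using Omega_path_annulus_facts(4)[of t] assms by simp
  also have "\<dots> \<le> 2 powr \<bar>\<gamma>\<bar> * exp (- (3 * \<eta>^2 / 40) * (1 - t)) * ((5 * \<bar>3 - \<gamma>\<bar> + 3) / \<eta>^2)"
    using norm_edge_integrand_Omega_near[OF assms] by (intro mult_right_mono) auto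
  finally show ?thesis .
qed

lemma has_integral_Omega_piece:
  assumes "r / (4 * kappa) \<le> lo" "lo \<le> hi" "hi \<le> 1"
    and "\<forall>t\<in>{lo..hi}. Omega_path t = \<alpha> + of_real t * \<beta>"
    and "\<forall>t\<in>{lo..hi}. cmod (edge_remainder \<gamma> \<eta> b (Omega_path t)) * cmod \<beta> \<le> B t"
    and "B integrable_on {lo..hi}"
  shows "\<exists>I. (path_part_integrand Omega_path (edge_integrand \<gamma> \<eta> b) has_integral
               edge_boundary_term \<gamma> \<eta> b (Omega_path hi) - edge_boundary_term \<gamma> \<eta> b (Omega_path lo) - I)
             {lo..hi}
             \<and> cmod I \<le> integral {lo..hi} B"
proof (rule has_integral_path_part_by_parts[OF _ assms(2,3,4) _ assms(5,6)])
  have "0 < r / (4 * kappa)" using r_pos kappa_bounds by simp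
  then show "0 \<le> lo" using assms(1) by simp
  show "\<forall>t\<in>{lo..hi}. (edge_boundary_term \<gamma> \<eta> b has_field_derivative
          edge_integrand \<gamma> \<eta> b (Omega_path t) + edge_remainder \<gamma> \<eta> b (Omega_path t)) (at (Omega_path t))
        \<and> isCont (edge_remainder \<gamma> \<eta> b) (Omega_path t)"
  proof
    fix t assume "t \<in> {lo..hi}"
    then have "t \<in> {r / (4 * kappa)..1}" using assms(1,3) by simp
    note facts = Omega_path_annulus_facts(1,2)[OF this]
    show "(edge_boundary_term \<gamma> \<eta> b has_field_derivative
          edge_integrand \<gamma> \<eta> b (Omega_path t) + edge_remainder \<gamma> \<eta> b (Omega_path t)) (at (Omega_path t))
        \<and> isCont (edge_remainder \<gamma> \<eta> b) (Omega_path t)"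
      using has_field_derivative_edge_boundary_term[OF facts] isCont_edge_remainder[OF facts] by blast
  qed
qed

lemma has_integral_Omega_far:
  "\<exists>I. (path_part_integrand Omega_path (edge_integrand \<gamma> \<eta> b) has_integral
          edge_boundary_term \<gamma> \<eta> b (Omega_path (3/4))
          - edge_boundary_term \<gamma> \<eta> b (Omega_path (r / (4 * kappa))) - I)
        {r / (4 * kappa)..3/4} \<and> cmod I \<le> 2 * (5 * \<bar>3 - \<gamma>\<bar> + 3) / \<bar>\<eta>\<bar>^3"
proof -
  define t0 where "t0 = r / (4 * kappa)"
  define K where "K = 5 * \<bar>3 - \<gamma>\<bar> + 3"
  define G where "G = edge_boundary_term \<gamma> \<eta> b"
  define PI where "PI = path_part_integrand Omega_path (edge_integrand \<gamma> \<eta> b)"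
  have "0 < t0" "t0 < 1/2" unfolding t0_def using r_pos r_le kappa_bounds by (auto simp: field_simps)
  have R_le: "cmod (edge_remainder \<gamma> \<eta> b (Omega_path t)) \<le> K / \<bar>\<eta>\<bar>^3" if "t \<in> {t0..3/4}" for t
    using norm_edge_remainder_Omega_far that unfolding t0_def K_def by blast
  have "\<exists>I. (PI has_integral G (Omega_path (1/2)) - G (Omega_path t0) - I) {t0..1/2}
            \<and> cmod I \<le> integral {t0..1/2} (\<lambda>_. K / \<bar>\<eta>\<bar>^3)"
    unfolding PI_def G_def t0_def
  proof (rule has_integral_Omega_piece[where \<alpha> = 0 and \<beta> = "2 * Omega_p1"])
    show "\<forall>t\<in>{r / (4 * kappa)..1/2}.
            cmod (edge_remainder \<gamma> \<eta> b (Omega_path t)) * cmod (2 * Omega_p1) \<le> K / \<bar>\<eta>\<bar>^3"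
      using R_le norm_Omega_piece_velocities(1) unfolding t0_def
      by (auto intro!: order_trans[OF mult_right_le_one_le])
  qed (use \<open>t0 < 1/2\<close> Omega_path_first in \<open>auto simp: t0_def\<close>)
  then obtain I1 where I1: "(PI has_integral G (Omega_path (1/2)) - G (Omega_path t0) - I1) {t0..1/2}"
      "cmod I1 \<le> (1/2 - t0) * (K / \<bar>\<eta>\<bar>^3)"
    using \<open>t0 < 1/2\<close> by auto
  have "\<exists>I. (PI has_integral G (Omega_path (3/4)) - G (Omega_path (1/2)) - I) {1/2..3/4}
            \<and> cmod I \<le> integral {1/2..3/4::real} (\<lambda>_. K / \<bar>\<eta>\<bar>^3 * 4)"
    unfolding PI_def G_def
  proof (rule has_integral_Omega_piece[where \<alpha> = "3 * Omega_p1 - 2 * Omega_p2"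
                                         and \<beta> = "4 * (Omega_p2 - Omega_p1)"])
    show "\<forall>t\<in>{1/2..3/4}.
            cmod (edge_remainder \<gamma> \<eta> b (Omega_path t)) * cmod (4 * (Omega_p2 - Omega_p1)) \<le> K / \<bar>\<eta>\<bar>^3 * 4"
    proof
      fix t :: real assume "t \<in> {1/2..3/4}"
      then have "cmod (edge_remainder \<gamma> \<eta> b (Omega_path t)) \<le> K / \<bar>\<eta>\<bar>^3"
        using R_le \<open>t0 < 1/2\<close> by auto
      then show "cmod (edge_remainder \<gamma> \<eta> b (Omega_path t)) * cmod (4 * (Omega_p2 - Omega_p1))
          \<le> K / \<bar>\<eta>\<bar>^3 * 4"
        using norm_Omega_piece_velocities(2) by (rule mult_mono) (auto simp: K_def)
    qed
  qed (use \<open>t0 < 1/2\<close> Omega_path_second in \<open>auto simp: t0_def\<close>)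
  then obtain I2 where I2: "(PI has_integral G (Omega_path (3/4)) - G (Omega_path (1/2)) - I2) {1/2..3/4}"
      "cmod I2 \<le> 1/4 * (K / \<bar>\<eta>\<bar>^3 * 4)"
    by auto
  have "(PI has_integral G (Omega_path (3/4)) - G (Omega_path t0) - (I1 + I2)) {t0..3/4}"
    using has_integral_combine[OF _ _ I1(1) I2(1)] \<open>t0 < 1/2\<close> by (simp add: algebra_simps)
  moreover have "cmod (I1 + I2) \<le> 2 * K / \<bar>\<eta>\<bar>^3"
  proof -
    have "(1/2 - t0) * (K / \<bar>\<eta>\<bar>^3) \<le> K / \<bar>\<eta>\<bar>^3"
      using \<open>0 < t0\<close> \<open>t0 < 1/2\<close> by (intro mult_left_le_one_le) (auto simp: K_def)
    then have "cmod (I1 + I2) \<le> 2 * (K / \<bar>\<eta>\<bar>^3)"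
      using norm_triangle_ineq[of I1 I2] I1(2) I2(2) by linarith
    then show ?thesis by simp
  qed
  ultimately show ?thesis unfolding PI_def G_def t0_def K_def by blast
qed

lemma has_integral_Omega_near:
  "\<exists>I. (path_part_integrand Omega_path (edge_integrand \<gamma> \<eta> b) has_integral
          edge_boundary_term \<gamma> \<eta> b 1 - edge_boundary_term \<gamma> \<eta> b (Omega_path (3/4)) - I) {3/4..1}
        \<and> cmod I \<le> 27 * 2 powr \<bar>\<gamma>\<bar> * (5 * \<bar>3 - \<gamma>\<bar> + 3) / \<bar>\<eta>\<bar>^3"
proof -
  define K where "K = 5 * \<bar>3 - \<gamma>\<bar> + 3"
  define l where "l = 3 * \<eta>^2 / 40"
  define c where "c = 2 * 2 powr \<bar>\<gamma>\<bar> * K / \<eta>^2"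
  have "1 \<le> \<bar>\<eta>\<bar>" using \<eta>_large by simp
  then have "0 < l" "0 \<le> c" unfolding l_def c_def K_def by simp_all
  have B: "((\<lambda>t. c * exp (- l * (1 - t))) has_integral c * ((1 - exp (- l * (1 - 3/4))) / l)) {3/4..1}"
    using has_integral_exp_decay[OF \<open>0 < l\<close>, of "3/4" 1] by (intro has_integral_mult_right) simp
  have "\<exists>I. (path_part_integrand Omega_path (edge_integrand \<gamma> \<eta> b) has_integral
          edge_boundary_term \<gamma> \<eta> b (Omega_path 1) - edge_boundary_term \<gamma> \<eta> b (Omega_path (3/4)) - I) {3/4..1}
        \<and> cmod I \<le> integral {3/4..1} (\<lambda>t. c * exp (- l * (1 - t)))"
  proof (rule has_integral_Omega_piece[where \<alpha> = "4 * Omega_p2 - 3" and \<beta> = "4 * (1 - Omega_p2)"])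
    show "r / (4 * kappa) \<le> 3/4" using r_pos r_le kappa_bounds by (simp add: field_simps)
    show "\<forall>t\<in>{3/4..1}. cmod (edge_remainder \<gamma> \<eta> b (Omega_path t)) * cmod (4 * (1 - Omega_p2))
            \<le> c * exp (- l * (1 - t))"
    proof
      fix t :: real assume "t \<in> {3/4..1}"
      have "cmod (edge_remainder \<gamma> \<eta> b (Omega_path t)) * cmod (4 * (1 - Omega_p2))
          \<le> 2 powr \<bar>\<gamma>\<bar> * exp (- l * (1 - t)) * (K / \<eta>^2) * 2"
        using norm_edge_remainder_Omega_near[OF \<open>t \<in> {3/4..1}\<close>] norm_Omega_piece_velocities(3)
        unfolding l_def K_def by (intro mult_mono) auto
      then show "cmod (edge_remainder \<gamma> \<eta> b (Omega_path t)) * cmod (4 * (1 - Omega_p2))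
          \<le> c * exp (- l * (1 - t))"
        by (simp add: c_def mult_ac)
    qed
    show "\<forall>t\<in>{3/4..1}. Omega_path t = 4 * Omega_p2 - 3 + of_real t * (4 * (1 - Omega_p2))"
      using Omega_path_third by simp
    show "(\<lambda>t. c * exp (- l * (1 - t))) integrable_on {3/4..1}" using B by blast
  qed simp_all
  then obtain I where I: "(path_part_integrand Omega_path (edge_integrand \<gamma> \<eta> b) has_integral
          edge_boundary_term \<gamma> \<eta> b (Omega_path 1) - edge_boundary_term \<gamma> \<eta> b (Omega_path (3/4)) - I) {3/4..1}"
      "cmod I \<le> integral {3/4..1} (\<lambda>t. c * exp (- l * (1 - t)))"
    by blast
  have "Omega_path 1 = 1" by (simp add: Omega_path_third)
  have "cmod I \<le> c * ((1 - exp (- l * (1 - 3/4))) / l)" using I(2) integral_unique[OF B] by simp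
  also have "\<dots> \<le> c * (1 / l)"
    using \<open>0 \<le> c\<close> \<open>0 < l\<close> by (intro mult_left_mono divide_right_mono) auto
  also have "\<dots> = 80 / 3 * 2 powr \<bar>\<gamma>\<bar> * K / \<bar>\<eta>\<bar>^4"
    using \<open>1 \<le> \<bar>\<eta>\<bar>\<close> unfolding c_def l_def by (simp add: field_simps power4_eq_xxxx power2_eq_square)
  also have "\<dots> \<le> 27 * 2 powr \<bar>\<gamma>\<bar> * K / \<bar>\<eta>\<bar>^3"
  proof -
    have "\<bar>\<eta>\<bar>^3 \<le> \<bar>\<eta>\<bar>^4" using \<open>1 \<le> \<bar>\<eta>\<bar>\<close> by (intro power_increasing) auto
    then show ?thesis using \<open>1 \<le> \<bar>\<eta>\<bar>\<close> by (intro frac_le mult_right_mono) (auto simp: K_def)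
  qed
  finally show ?thesis using I(1) unfolding \<open>Omega_path 1 = 1\<close> K_def by blast
qed

lemma has_integral_Omega_by_parts:
  "\<exists>I. (path_part_integrand Omega_path (edge_integrand \<gamma> \<eta> b) has_integral I) {r / (4 * kappa)<..1}
        \<and> cmod (I - 1 / (2 * of_real (\<eta>^2))) \<le> (2 + (2 + 27 * 2 powr \<bar>\<gamma>\<bar>) * (5 * \<bar>3 - \<gamma>\<bar> + 3)) / \<bar>\<eta>\<bar>^3"
proof -
  define t0 where "t0 = r / (4 * kappa)"
  define K where "K = 5 * \<bar>3 - \<gamma>\<bar> + 3"
  define G where "G = edge_boundary_term \<gamma> \<eta> b"
  define PI where "PI = path_part_integrand Omega_path (edge_integrand \<gamma> \<eta> b)"
  have "t0 \<le> 3/4" unfolding t0_def using r_pos r_le kappa_bounds by (simp add: field_simps)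
  obtain I1 where I1: "(PI has_integral G (Omega_path (3/4)) - G (Omega_path t0) - I1) {t0..3/4}"
      "cmod I1 \<le> 2 * K / \<bar>\<eta>\<bar>^3"
    using has_integral_Omega_far unfolding PI_def G_def t0_def K_def by blast
  obtain I2 where I2: "(PI has_integral G 1 - G (Omega_path (3/4)) - I2) {3/4..1}"
      "cmod I2 \<le> 27 * 2 powr \<bar>\<gamma>\<bar> * K / \<bar>\<eta>\<bar>^3"
    using has_integral_Omega_near unfolding PI_def G_def K_def by blast
  have "(PI has_integral G 1 - G (Omega_path t0) - (I1 + I2)) {t0..1}"
    using has_integral_combine[OF \<open>t0 \<le> 3/4\<close> _ I1(1) I2(1)] by (simp add: algebra_simps)
  then have integral: "(PI has_integral G 1 - G (Omega_path t0) - (I1 + I2)) {t0<..1}"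
    by (subst has_integral_spike_set_eq[where S = "{t0<..1}" and T = "{t0..1}"])
       (auto intro: negligible_subset[of "{t0}"])
  have G_one: "cmod (G 1 - 1 / (2 * of_real (\<eta>^2))) \<le> 1 / \<bar>\<eta>\<bar>^3"
    unfolding G_def using b_le \<eta>_large by (intro norm_edge_boundary_term_one_approx) auto
  have G_t0: "cmod (G (Omega_path t0)) \<le> 1 / \<bar>\<eta>\<bar>^3"
  proof -
    have "t0 \<in> {r / (4 * kappa)..3/4}" using \<open>t0 \<le> 3/4\<close> by (simp add: t0_def)
    then have "cmod (G (Omega_path t0)) \<le> cmod (edge_integrand \<gamma> \<eta> b (Omega_path t0)) / \<eta>^2"
      using Omega_path_annulus_facts(3)[of t0] unfolding G_def by simp
    also have "\<dots> \<le> (1 / \<bar>\<eta>\<bar>) / \<eta>^2"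
      using norm_edge_integrand_Omega_far[OF \<open>t0 \<in> {r / (4 * kappa)..3/4}\<close>]
      by (rule divide_right_mono) simp
    also have "\<dots> = 1 / \<bar>\<eta>\<bar>^3" using inverse_abs_mult_divide_square[of \<eta> 1] by simp
    finally show ?thesis .
  qed
  have "cmod (G 1 - G (Omega_path t0) - (I1 + I2) - 1 / (2 * of_real (\<eta>^2)))
      = cmod ((G 1 - 1 / (2 * of_real (\<eta>^2))) - G (Omega_path t0) - I1 - I2)"
    by (simp add: algebra_simps)
  also have "\<dots> \<le> cmod (G 1 - 1 / (2 * of_real (\<eta>^2))) + cmod (G (Omega_path t0)) + cmod I1 + cmod I2"
    by (intro order_trans[OF norm_triangle_ineq4] add_mono order_refl)
  also have "\<dots> \<le> 1 / \<bar>\<eta>\<bar>^3 + 1 / \<bar>\<eta>\<bar>^3 + 2 * K / \<bar>\<eta>\<bar>^3 + 27 * 2 powr \<bar>\<gamma>\<bar> * K / \<bar>\<eta>\<bar>^3"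
    using G_one G_t0 I1(2) I2(2) by (intro add_mono)
  also have "\<dots> = (2 + (2 + 27 * 2 powr \<bar>\<gamma>\<bar>) * K) / \<bar>\<eta>\<bar>^3"
    by (simp only: add_divide_distrib[symmetric]) (simp add: algebra_simps)
  finally show ?thesis using integral
    unfolding PI_def t0_def K_def by blast
qed

end

section \<open>The truncated integral\<close>

lemma truncation_radius_bounds:
  fixes C \<eta> :: real
  assumes "10 \<le> C" "36 * C^2 \<le> \<bar>\<eta>\<bar>"
  defines "r \<equiv> C * \<bar>\<eta>\<bar> powr (-1/2)"
  shows "0 < r" "r \<le> 1/6" "100 \<le> \<bar>\<eta>\<bar> * r^2" "1 / \<bar>\<eta>\<bar> \<le> r"
proof -
  define q where "q = sqrt \<bar>\<eta>\<bar>"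
  have "0 < 36 * C^2" using assms(1) by simp
  then have "0 < \<bar>\<eta>\<bar>" using assms(2) by linarith
  then have "0 < q" "q^2 = \<bar>\<eta>\<bar>" unfolding q_def by simp_all
  have r_eq: "r = C / q" unfolding r_def q_def using \<open>0 < \<bar>\<eta>\<bar>\<close>
    by (simp add: powr_minus_divide powr_half_sqrt)
  show "0 < r" unfolding r_eq using assms(1) \<open>0 < q\<close> by simp
  have "(6 * C)^2 \<le> q^2" using assms(2) \<open>q^2 = \<bar>\<eta>\<bar>\<close> by (simp add: power_mult_distrib)
  then have "6 * C \<le> q" by (rule power2_le_imp_le) (use \<open>0 < q\<close> in simp)
  then show "r \<le> 1/6" unfolding r_eq using \<open>0 < q\<close> by (simp add: field_simps)
  have "\<bar>\<eta>\<bar> * r^2 = C^2" unfolding r_eq \<open>q^2 = \<bar>\<eta>\<bar>\<close>[symmetric] using \<open>0 < q\<close>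
    by (simp add: power_divide)
  moreover have "10^2 \<le> C^2" using assms(1) by (intro power_mono) auto
  ultimately show "100 \<le> \<bar>\<eta>\<bar> * r^2" by simp
  have "1 \<le> q" using \<open>6 * C \<le> q\<close> assms(1) by simp
  then have "1 / \<bar>\<eta>\<bar> \<le> 1 / q" unfolding \<open>q^2 = \<bar>\<eta>\<bar>\<close>[symmetric] using \<open>0 < q\<close>
    by (simp add: power2_eq_square field_simps)
  also have "\<dots> \<le> C / q" using assms(1) \<open>0 < q\<close> by (intro divide_right_mono) auto
  finally show "1 / \<bar>\<eta>\<bar> \<le> r" unfolding r_eq .
qed

lemma norm_half_inverse_square_le:
  assumes "\<eta> \<noteq> 0" "\<bar>\<eta>\<bar> powr (-1/2) < cmod a"
  shows "cmod (1 / (2 * a^2)) \<le> \<bar>\<eta>\<bar> / 2"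
proof -
  have "(\<bar>\<eta>\<bar> powr (-1/2))^2 = \<bar>\<eta>\<bar> powr (-1)"
    using assms(1) by (subst powr_power) simp_all
  then have "1 / \<bar>\<eta>\<bar> < (cmod a)^2"
    using power_strict_mono[OF assms(2), of 2] by simp
  then have "1 / (cmod a)^2 < \<bar>\<eta>\<bar>" using assms(1)
    by (metis divide_less_eq mult.commute zero_less_abs_iff zero_less_divide_1_iff order_less_trans)
  then show ?thesis by (simp add: norm_divide norm_mult norm_power)
qed

lemma path_part_integrand_integrand36:
  assumes "a \<noteq> 0" "t \<in> {0<..1}"
  shows "path_part_integrand Omega_path (integrand36 \<gamma> a \<eta> lam) t
           = path_part_integrand Omega_path (edge_integrand \<gamma> \<eta> (1 / (2 * a^2))) t"
proof -
  have "Omega_path t \<noteq> 0" using Omega_path_bounds(1)[of t] assms(2) by auto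
  then show ?thesis
    unfolding path_part_integrand_def by (simp add: integrand36_eq_edge_integrand[OF assms(1)])
qed

lemma path_part_domain_Omega_truncated:
  assumes "0 < C * \<bar>\<eta>\<bar> powr (-1/2)" "C * \<bar>\<eta>\<bar> powr (-1/2) \<le> 1/6"
  shows "path_part_domain Omega_path (Omega - Omega_tilde C \<eta>) = {C * \<bar>\<eta>\<bar> powr (-1/2) / (4 * kappa)<..1}"
proof -
  have "Omega - Omega_tilde C \<eta> = {\<tau> \<in> Omega. C * \<bar>\<eta>\<bar> powr (-1/2) < cmod \<tau>}"
    unfolding Omega_tilde_def by auto
  then show ?thesis using path_part_domain_Omega_annulus[OF assms] by simp
qed

lemma edge_integral_estimate:
  fixes C \<gamma> \<eta> lam :: real and a :: complex
  assumes "10 \<le> C" and \<eta>_large: "36 * C^2 + 60 * (\<bar>\<gamma>\<bar> + 1) \<le> \<bar>\<eta>\<bar>"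
    and "a \<in> Lambda - Lambda_tilde \<eta>"
  shows "path_part_integrand Omega_path (integrand36 \<gamma> a \<eta> lam)
           integrable_on path_part_domain Omega_path (Omega - Omega_tilde C \<eta>)"
    and "cmod (integral (path_part_domain Omega_path (Omega - Omega_tilde C \<eta>))
                (path_part_integrand Omega_path (integrand36 \<gamma> a \<eta> lam)) - 1 / (2 * of_real (\<eta>^2)))
           \<le> (2 + (2 + 27 * 2 powr \<bar>\<gamma>\<bar>) * (5 * \<bar>3 - \<gamma>\<bar> + 3)) * \<bar>\<eta>\<bar> powr (-3)"
proof -
  define r where "r = C * \<bar>\<eta>\<bar> powr (-1/2)"
  have "0 \<le> 36 * C^2" "0 \<le> 60 * (\<bar>\<gamma>\<bar> + 1)" by simp_all
  then have "36 * C^2 \<le> \<bar>\<eta>\<bar>" "60 * (\<bar>\<gamma>\<bar> + 1) \<le> \<bar>\<eta>\<bar>" using \<eta>_large by linarith+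
  note r = truncation_radius_bounds[OF \<open>10 \<le> C\<close> this(1), folded r_def]
  then have "\<eta> \<noteq> 0" unfolding r_def by auto
  \<comment> \<open>This is all that is used of \<open>a \<in> Lambda - Lambda_tilde \<eta>\<close>.\<close>
  have "\<bar>\<eta>\<bar> powr (-1/2) < cmod a" using assms(3) unfolding Lambda_tilde_def by auto
  then have "a \<noteq> 0" by auto
  obtain I where I: "(path_part_integrand Omega_path (edge_integrand \<gamma> \<eta> (1 / (2 * a^2))) has_integral I)
      {r / (4 * kappa)<..1}"
    "cmod (I - 1 / (2 * of_real (\<eta>^2))) \<le> (2 + (2 + 27 * 2 powr \<bar>\<gamma>\<bar>) * (5 * \<bar>3 - \<gamma>\<bar> + 3)) / \<bar>\<eta>\<bar>^3"
    using has_integral_Omega_by_parts[OF norm_half_inverse_square_le[OF \<open>\<eta> \<noteq> 0\<close> \<open>\<bar>\<eta>\<bar> powr (-1/2) < cmod a\<close>]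
        \<open>60 * (\<bar>\<gamma>\<bar> + 1) \<le> \<bar>\<eta>\<bar>\<close> r] by blast
  have "0 < r / (4 * kappa)" using r(1) kappa_bounds by simp
  then have "(path_part_integrand Omega_path (integrand36 \<gamma> a \<eta> lam) has_integral I) {r / (4 * kappa)<..1}"
    using path_part_integrand_integrand36[OF \<open>a \<noteq> 0\<close>] by (intro has_integral_eq[OF _ I(1)]) auto
  then have integral: "(path_part_integrand Omega_path (integrand36 \<gamma> a \<eta> lam) has_integral I)
      (path_part_domain Omega_path (Omega - Omega_tilde C \<eta>))"
    using path_part_domain_Omega_truncated r(1,2) unfolding r_def by simp
  then show "path_part_integrand Omega_path (integrand36 \<gamma> a \<eta> lam)
      integrable_on path_part_domain Omega_path (Omega - Omega_tilde C \<eta>)"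
    by blast
  have "\<bar>\<eta>\<bar> powr (-3) = 1 / \<bar>\<eta>\<bar>^3" using \<open>\<eta> \<noteq> 0\<close> by (simp add: powr_minus_divide powr_realpow)
  then show "cmod (integral (path_part_domain Omega_path (Omega - Omega_tilde C \<eta>))
                (path_part_integrand Omega_path (integrand36 \<gamma> a \<eta> lam)) - 1 / (2 * of_real (\<eta>^2)))
      \<le> (2 + (2 + 27 * 2 powr \<bar>\<gamma>\<bar>) * (5 * \<bar>3 - \<gamma>\<bar> + 3)) * \<bar>\<eta>\<bar> powr (-3)"
    using I(2) unfolding integral_unique[OF integral] by simp
qed

theorem lemma3p6:
  fixes \<gamma> C0 :: real
  assumes "C0 > 0"
  shows "\<exists>C1>0. \<forall>C\<ge>C1. \<exists>K \<eta>0. \<forall>\<eta> lam a.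
     \<eta>0 \<le> \<bar>\<eta>\<bar> \<and> 1 / C0 \<le> lam \<and> lam \<le> C0 \<and> a \<in> Lambda - Lambda_tilde \<eta> \<longrightarrow>
       path_part_integrand Omega_path (integrand36 \<gamma> a \<eta> lam)
         integrable_on path_part_domain Omega_path (Omega - Omega_tilde C \<eta>) \<and>
       cmod (integral (path_part_domain Omega_path (Omega - Omega_tilde C \<eta>))
                (path_part_integrand Omega_path (integrand36 \<gamma> a \<eta> lam))
             - 1 / (2 * of_real (\<eta>^2)))
         \<le> K * \<bar>\<eta>\<bar> powr (-3)"
  apply (rule exI[of _ 10], intro conjI allI impI)
   apply simp
  \<comment> \<open>The lambda-terms of the phase cancel.\<close>
  subgoal for C
    apply (rule exI[of _ "2 + (2 + 27 * 2 powr \<bar>\<gamma>\<bar>) * (5 * \<bar>3 - \<gamma>\<bar> + 3)"])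
    apply (rule exI[of _ "36 * C^2 + 60 * (\<bar>\<gamma>\<bar> + 1)"])
    by (intro allI impI conjI; elim conjE; rule edge_integral_estimate; assumption)
  done

end
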